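(* Let $\bar A=\{A_i\}$ be a partition with $A_i\in(P_i,Q_i)$ for all $i$, and fix $j$. (i) If $x\in[A_j,Q_j)$ and $T_{j-1}(x)\in(P_{\theta(j-1)},A_{\theta(j-1)}]$, then $T_{\theta(j-1)-1}T_{j-1}(x)\in(x,P_{j+1})$. (ii) If $x\in(P_j,A_j]$ and $T_j(x)\in[A_{\rho(j)+1},Q_{\rho(j)+1})$, then $T_{\rho(j)+1}T_j(x)\in(Q_{j-1},x)$.
   Context: Setting. Fix $g\ge 2$; indices are mod $8g-4$. Let $\mathcal F$ be the regular hyperbolic $(8g-4)$-gon in the unit disk centered at $0$ with all interior angles $\pi/2$, sides labeled $1,\dots,8g-4$ counterclockwise, side $i$ joining vertices $V_i$ and $V_{i+1}$. The complete geodesic extending side $i$ goes from $P_i$ (beyond $V_i$) to $Q_{i+1}$ (beyond $V_{i+1}$) on the unit circle; counterclockwise order $P_1,Q_1,P_2,Q_2,\dots,P_{8g-4},Q_{8g-4}$. $\sigma(i)=4g-i$ ($i$ odd), $\sigma(i)=2-i$ ($i$ even), $\rho(i)=\sigma(i)+1$, $\theta(i)=\sigma(i)-1$. $T_i$ is the Möbius transformation mapping side $i$ onto side $\sigma(i)$, with isometric circle the geodesic $P_iQ_{i+1}$, mapped onto the geodesic $Q_{\sigma(i)+1}P_{\sigma(i)}$, inside to outside. Arcs $[A,B)$, $(A,B]$, $(A,B)$ are counterclockwise from $A$ to $B$. *)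

theory Defs
  imports "HOL-Analysis.Analysis"
begin

definition Nsides :: "nat \<Rightarrow> int" where
  "Nsides g = 8 * int g - 4"

definition delta :: "nat \<Rightarrow> real" where
  "delta g = 2 * pi / real_of_int (Nsides g)"

text \<open>Direction of the midpoint of side i (a fixed rotation convention).\<close>
definition alpha :: "nat \<Rightarrow> int \<Rightarrow> real" where
  "alpha g i = real_of_int i * delta g"

text \<open>Half of the angular width of the geodesic extending a side: for a regular
  N-gon with interior angles pi/2, the Euclidean circle carrying side i has center
  at distance 1/sqrt(cos delta) from 0, hence cos beta = sqrt (cos delta).\<close>
definition beta :: "nat \<Rightarrow> real" where
  "beta g = arccos (sqrt (cos (delta g)))"

text \<open>Endpoints: the geodesic extending side i goes from P_i to Q_(i+1).\<close>
definition Pt :: "nat \<Rightarrow> int \<Rightarrow> complex" where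
  "Pt g i = cis (alpha g i - beta g)"

definition Qt :: "nat \<Rightarrow> int \<Rightarrow> complex" where
  "Qt g i = cis (alpha g (i - 1) + beta g)"

definition sigma :: "nat \<Rightarrow> int \<Rightarrow> int" where
  "sigma g i = (if odd i then 4 * int g - i else 2 - i)"

definition rho :: "nat \<Rightarrow> int \<Rightarrow> int" where
  "rho g i = sigma g i + 1"

definition theta :: "nat \<Rightarrow> int \<Rightarrow> int" where
  "theta g i = sigma g i - 1"

text \<open>Distance from 0 to the centre, and radius, of the isometric circles.\<close>
definition Cdist :: "nat \<Rightarrow> real" where
  "Cdist g = 1 / sqrt (cos (delta g))"

definition Rrad :: "nat \<Rightarrow> real" where
  "Rrad g = sqrt ((Cdist g)\<^sup>2 - 1)"

text \<open>T_i(z) = (a z + c)/(conj c z + conj a) with |a|^2 - |c|^2 = 1, isometric circle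
  |conj c z + conj a| = 1 equal to the circle of side i (centre -conj a / conj c),
  and isometric circle of T_i^{-1} (centre a / conj c) equal to the circle of side sigma(i).
  These conditions determine T_i uniquely (as a Moebius map).\<close>
definition Tm :: "nat \<Rightarrow> int \<Rightarrow> complex \<Rightarrow> complex" where
  "Tm g i z =
     (let s = sigma g i;
          th = (alpha g i + alpha g s) / 2;
          c = \<i> * cis th / complex_of_real (Rrad g);
          a = complex_of_real (Cdist g) * cis (alpha g s) * cnj c
      in (a * z + c) / (cnj c * z + cnj a))"

definition ccw :: "complex \<Rightarrow> complex \<Rightarrow> real" where
  "ccw A x = (let t = Arg (x / A) in if t < 0 then t + 2 * pi else t)"

definition arc_co :: "complex \<Rightarrow> complex \<Rightarrow> complex set" where
  "arc_co A B = {x. cmod x = 1 \<and> ccw A x < ccw A B}"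

definition arc_oc :: "complex \<Rightarrow> complex \<Rightarrow> complex set" where
  "arc_oc A B = {x. cmod x = 1 \<and> 0 < ccw A x \<and> ccw A x \<le> ccw A B}"

definition arc_oo :: "complex \<Rightarrow> complex \<Rightarrow> complex set" where
  "arc_oo A B = {x. cmod x = 1 \<and> 0 < ccw A x \<and> ccw A x < ccw A B}"

end

theory Submission
  imports Defs
begin

text \<open>Rotating by \<open>cis (alpha g j)\<close> normalises side \<open>j\<close> to side \<open>0\<close>.  In these coordinates every
  generator is a rotation composed with the half-turn \<open>F z = (1 - C z) / (C - z)\<close>, and
  \<open>T\<^bsub>\<theta>(j-1)-1\<^esub> T\<^bsub>j-1\<^esub>\<close> becomes \<open>M = R\<^sub>\<delta> F R\<^sub>2\<^sub>\<delta> F R\<^sub>\<delta>\<close>, a product of two half-turns and hence a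
  hyperbolic Moebius map; its fixed points are \<open>cis (\<plusminus> \<beta>)\<close>, the ends of the geodesic through
  side \<open>0\<close>.  An explicit computation shows that the oriented area of \<open>cis (- \<beta>), x, M x\<close> is a
  positive multiple of that of \<open>cis (- \<beta>), x, cis \<beta>\<close>, so \<open>M\<close> moves the arc between its fixed points
  counterclockwise.  The hypothesis on \<open>T\<^bsub>j-1\<^esub> x\<close>, carried along by the orientation-preserving
  \<open>F\<close>, bounds \<open>M x\<close> by \<open>P\<^bsub>j+1\<^esub>\<close>.  Part (ii) is part (i) reflected in the real axis.\<close>

section \<open>Cyclic order on the unit circle\<close>

definition orient :: "complex \<Rightarrow> complex \<Rightarrow> complex \<Rightarrow> real" where
  "orient p q r = Im (cnj (q - p) * (r - p))"

lemma orient_mult_unit: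
  assumes "cmod a = 1"
  shows "orient (a * p) (a * q) (a * r) = orient p q r"
proof -
  have "cnj (a * q - a * p) * (a * r - a * p) = (cnj a * a) * (cnj (q - p) * (r - p))"
    by (simp add: algebra_simps)
  also have "cnj a * a = 1"
    using assms complex_norm_square[of a] by (simp add: mult.commute)
  finally show ?thesis
    unfolding orient_def by simp
qed

lemma orient_cnj: "orient (cnj p) (cnj q) (cnj r) = orient r q p"
  unfolding orient_def by (simp add: algebra_simps)

lemma orient_cis:
  "orient (cis s) (cis t) (cis u) = 4 * sin ((u - s) / 2) * sin ((u - t) / 2) * sin ((t - s) / 2)"
proof -
  define x y where "x = (t - s) / 2" and "y = (u - t) / 2"
  have "orient (cis s) (cis t) (cis u) = sin (u - t) + sin (t - s) - sin (u - s)"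
    unfolding orient_def by (simp add: cis.code sin_diff algebra_simps)
  also have "\<dots> = sin (2 * y) + sin (2 * x) - sin (2 * x + 2 * y)"
  proof -
    have "2 * y = u - t" "2 * x = t - s" "2 * x + 2 * y = u - s"
      by (simp_all add: x_def y_def field_simps)
    then show ?thesis by (simp only:)
  qed
  also have "\<dots> = 4 * sin (x + y) * sin y * sin x"
    unfolding sin_add[of "2 * x" "2 * y"] sin_add[of x y] sin_double cos_double_sin
    by (simp add: algebra_simps power2_eq_square)
  finally show ?thesis
    by (simp add: x_def y_def diff_divide_distrib)
qed

lemma ccw_unit_circle:
  assumes "cmod a = 1" "cmod x = 1"
  shows "0 \<le> ccw a x" "ccw a x < 2 * pi" "x = a * cis (ccw a x)"
proof -
  define z where "z = x / a"
  have "a \<noteq> 0" using assms by auto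
  then have x: "x = a * z" by (simp add: z_def)
  have "cmod z = 1" using assms by (simp add: z_def norm_divide)
  then have "z \<noteq> 0" "sgn z = z" by (auto simp: sgn_div_norm)
  then have cz: "cis (Arg z) = z" using cis_Arg by metis
  have bounds: "- pi < Arg z" "Arg z \<le> pi" using Arg_bounded[of z] by auto
  have "0 \<le> ccw a x \<and> ccw a x < 2 * pi \<and> x = a * cis (ccw a x)"
  proof (cases "Arg z < 0")
    case True
    then have "ccw a x = Arg z + 2 * pi" unfolding ccw_def Let_def z_def[symmetric] by simp
    moreover have "cis (Arg z + 2 * pi) = z" using cz by (simp add: cis_mult[symmetric])
    ultimately show ?thesis
      using True bounds x by simp
  next
    case False
    then have "ccw a x = Arg z" unfolding ccw_def Let_def z_def[symmetric] by simp
    then show ?thesis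
      using False bounds x cz by simp
  qed
  then show "0 \<le> ccw a x" "ccw a x < 2 * pi" "x = a * cis (ccw a x)"
    by blast+
qed

lemma ccw_self: "a \<noteq> 0 \<Longrightarrow> ccw a a = 0"
  unfolding ccw_def by simp

lemma sgn_sin_eq_sgn: "- pi < u \<Longrightarrow> u < pi \<Longrightarrow> sgn (sin u) = sgn (u :: real)"
  using sin_gt_zero[of u] sin_gt_zero[of "- u"]
  by (cases u "0 :: real" rule: linorder_cases) auto

lemma sgn_orient_ccw:
  assumes "cmod a = 1" "cmod p = 1" "cmod q = 1" "cmod r = 1"
  shows "sgn (orient p q r) = sgn ((ccw a r - ccw a p) * (ccw a r - ccw a q) * (ccw a q - ccw a p))"
proof -
  define s t u where "s = ccw a p" and "t = ccw a q" and "u = ccw a r"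
  note ccw = ccw_unit_circle[OF assms(1)]
  have "orient p q r = orient (a * cis s) (a * cis t) (a * cis u)"
    using ccw assms by (simp add: s_def t_def u_def)
  also have "\<dots> = 4 * sin ((u - s) / 2) * sin ((u - t) / 2) * sin ((t - s) / 2)"
    by (simp add: orient_mult_unit[OF assms(1)] orient_cis)
  finally have "sgn (orient p q r) = sgn (sin ((u - s) / 2)) * sgn (sin ((u - t) / 2)) * sgn (sin ((t - s) / 2))"
    by (simp add: sgn_mult)
  also have "\<dots> = sgn ((u - s) / 2) * sgn ((u - t) / 2) * sgn ((t - s) / 2)"
    using ccw[OF assms(2)] ccw[OF assms(3)] ccw[OF assms(4)]
    by (simp add: sgn_sin_eq_sgn s_def t_def u_def)
  finally show ?thesis
    by (simp add: sgn_mult s_def t_def u_def)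
qed

lemma orient_pos_iff_ccw:
  assumes "cmod a = 1" "cmod p = 1" "cmod q = 1" "cmod r = 1"
  shows "orient p q r > 0 \<longleftrightarrow> (ccw a r - ccw a p) * (ccw a r - ccw a q) * (ccw a q - ccw a p) > 0"
  using sgn_orient_ccw[OF assms] by (metis sgn_greater)

lemma orient_pos_iff_ccw_between:
  assumes "cmod a = 1" "cmod x = 1" "cmod c = 1"
  shows "orient a x c > 0 \<longleftrightarrow> 0 < ccw a x \<and> ccw a x < ccw a c"
proof -
  have "a \<noteq> 0" using assms by auto
  then have "orient a x c > 0 \<longleftrightarrow> ccw a c * (ccw a c - ccw a x) * ccw a x > 0"
    using orient_pos_iff_ccw[OF assms(1,1,2,3)] by (simp add: ccw_self)
  moreover have "0 \<le> ccw a x" "0 \<le> ccw a c" using ccw_unit_circle assms by auto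
  ultimately show ?thesis
    by (smt (verit, best) mult_le_0_iff mult_pos_pos zero_less_mult_iff)
qed

lemma arc_oo_iff_orient:
  assumes "cmod a = 1" "cmod x = 1" "cmod c = 1"
  shows "x \<in> arc_oo a c \<longleftrightarrow> orient a x c > 0"
  using orient_pos_iff_ccw_between[OF assms] assms(2) unfolding arc_oo_def by auto

lemma mult_unit_in_arc_oo_iff:
  assumes "cmod e = 1"
  shows "e * x \<in> arc_oo (e * a) (e * c) \<longleftrightarrow> x \<in> arc_oo a c"
proof -
  have "e \<noteq> 0" using assms by auto
  then have "ccw (e * a) (e * y) = ccw a y" for y
    unfolding ccw_def by simp
  then show ?thesis
    using assms unfolding arc_oo_def by (simp add: norm_mult)
qed

lemma mult_unit_in_arc_oo_iff_orient:
  assumes "cmod e = 1" "cmod y = 1" "cmod p = 1" "cmod q = 1"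
  shows "e * y \<in> arc_oo (e * p) (e * q) \<longleftrightarrow> orient p y q > 0"
  using mult_unit_in_arc_oo_iff[OF assms(1)] arc_oo_iff_orient[OF assms(3,2,4)] by simp

lemma orient_pos_trans_right:
  assumes "cmod a = 1" "cmod x = 1" "cmod c = 1" "cmod d = 1"
    and "orient a x c > 0" "orient a c d > 0"
  shows "orient a x d > 0"
  using orient_pos_iff_ccw_between[of a x c] orient_pos_iff_ccw_between[of a c d]
    orient_pos_iff_ccw_between[of a x d] assms by auto

lemma orient_pos_trans_left:
  assumes "cmod p = 1" "cmod a = 1" "cmod x = 1" "cmod q = 1"
    and "orient p a q > 0" "orient a x q > 0"
  shows "orient p x q > 0"
proof -
  have a: "0 < ccw p a" "ccw p a < ccw p q"
    using orient_pos_iff_ccw_between[of p a q] assms by auto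
  have "(ccw p q - ccw p a) * (ccw p q - ccw p x) * (ccw p x - ccw p a) > 0"
    using orient_pos_iff_ccw[of p a x q] assms by auto
  then have "(ccw p q - ccw p x) * (ccw p x - ccw p a) > 0"
    using a by (smt (verit) mult_pos_pos zero_less_mult_iff mult.assoc)
  then have "ccw p a < ccw p x \<and> ccw p x < ccw p q"
    using a by (smt (verit) mult_nonneg_nonpos mult_nonpos_nonneg)
  then show ?thesis
    using orient_pos_iff_ccw_between[of p x q] assms a by auto
qed

lemma orient_pos_shift:
  assumes "cmod z = 1" "cmod w = 1" "cmod v = 1" "cmod y = 1"
    and "orient z w v > 0" "orient z v y > 0"
  shows "orient w v y > 0"
proof -
  have "0 < ccw z w" "ccw z w < ccw z v" "ccw z v < ccw z y"
    using orient_pos_iff_ccw_between[of z w v] orient_pos_iff_ccw_between[of z v y] assms by auto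
  then have "(ccw z y - ccw z w) * (ccw z y - ccw z v) * (ccw z v - ccw z w) > 0"
    by (simp add: mult_pos_pos)
  then show ?thesis
    using orient_pos_iff_ccw[of z w v y] assms by auto
qed

lemma arc_co_subset_arc_oo:
  assumes "a \<in> arc_oo p q" "cmod p = 1" "cmod q = 1"
  shows "arc_co a q \<subseteq> arc_oo p q"
proof
  fix x assume x: "x \<in> arc_co a q"
  have a1: "cmod a = 1"
    using assms(1) unfolding arc_oo_def by simp
  then have a: "orient p a q > 0"
    using assms arc_oo_iff_orient[of p a q] by simp
  have x1: "cmod x = 1" and lt: "ccw a x < ccw a q"
    using x unfolding arc_co_def by auto
  have "x = a \<or> orient a x q > 0"
  proof (cases "ccw a x = 0")
    case True
    then show ?thesis using ccw_unit_circle(3)[OF a1 x1] by simp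
  next
    case False
    then show ?thesis
      using ccw_unit_circle(1)[OF a1 x1] orient_pos_iff_ccw_between[OF a1 x1 assms(3)] lt by simp
  qed
  then show "x \<in> arc_oo p q"
  proof
    assume "orient a x q > 0"
    then show ?thesis
      using orient_pos_trans_left[OF assms(2) a1 x1 assms(3) a]
        arc_oo_iff_orient[OF assms(2) x1 assms(3)] by blast
  qed (use assms(1) in simp)
qed

lemma arc_oc_subset_arc_oo:
  assumes "a \<in> arc_oo p q" "cmod p = 1" "cmod q = 1"
  shows "arc_oc p a \<subseteq> arc_oo p q"
proof
  fix x assume x: "x \<in> arc_oc p a"
  have a1: "cmod a = 1"
    using assms(1) unfolding arc_oo_def by simp
  then have a: "orient p a q > 0"
    using assms arc_oo_iff_orient[of p a q] by simp
  have x1: "cmod x = 1" and bounds: "0 < ccw p x" "ccw p x \<le> ccw p a"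
    using x unfolding arc_oc_def by auto
  have "x = a \<or> orient p x a > 0"
  proof (cases "ccw p x = ccw p a")
    case True
    then show ?thesis using ccw_unit_circle(3)[OF assms(2) x1] ccw_unit_circle(3)[OF assms(2) a1] by metis
  next
    case False
    then show ?thesis using orient_pos_iff_ccw_between[OF assms(2) x1 a1] bounds by simp
  qed
  then show "x \<in> arc_oo p q"
  proof
    assume "orient p x a > 0"
    then show ?thesis
      using orient_pos_trans_right[OF assms(2) x1 a1 assms(3) _ a]
        arc_oo_iff_orient[OF assms(2) x1 assms(3)] by blast
  qed (use assms(1) in simp)
qed

lemma cnj_unit:
  assumes "cmod z = 1"
  shows "cnj z = 1 / z"
proof -
  have "z * cnj z = 1" "z \<noteq> 0" using complex_norm_square[of z] assms by auto
  then show ?thesis by (simp add: field_simps)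
qed

lemma orient_unit_eq:
  assumes "cmod p = 1" "cmod q = 1" "cmod r = 1"
  shows "complex_of_real (orient p q r) = (p - q) * (r - p) * (r - q) / (2 * \<i> * p * q * r)"
proof -
  define Z where "Z = cnj (q - p) * (r - p)"
  have "p \<noteq> 0" "q \<noteq> 0" "r \<noteq> 0" using assms by auto
  have "complex_of_real (orient p q r) = (Z - cnj Z) / (2 * \<i>)"
    unfolding orient_def Z_def[symmetric] by (simp add: complex_eq_iff)
  also have "\<dots> = ((1 / q - 1 / p) * (r - p) - (q - p) * (1 / r - 1 / p)) / (2 * \<i>)"
    using assms by (simp add: Z_def cnj_unit)
  also have "\<dots> = (p - q) * (r - p) * (r - q) / (2 * \<i> * p * q * r)"
    using \<open>p \<noteq> 0\<close> \<open>q \<noteq> 0\<close> \<open>r \<noteq> 0\<close> by (simp add: field_simps)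
  finally show ?thesis .
qed

section \<open>The hyperbolic half-turn\<close>

text \<open>For \<open>C > 1\<close> this is the hyperbolic half-turn of the unit disk about the real point
  \<open>C - sqrt (C\<^sup>2 - 1)\<close>; every generator \<open>T\<^sub>i\<close> is such a half-turn composed with rotations.\<close>

definition half_turn :: "real \<Rightarrow> complex \<Rightarrow> complex" where
  "half_turn C z = (1 - complex_of_real C * z) / (complex_of_real C - z)"

lemma half_turn_denom_nonzero:
  assumes "C > 1" "cmod z = 1"
  shows "complex_of_real C - z \<noteq> 0"
proof
  assume "complex_of_real C - z = 0"
  then have "cmod z = C" using assms(1) by (metis eq_iff_diff_eq_0 norm_of_real abs_of_pos less_trans zero_less_one)
  then show False using assms by simp
qed

lemma norm_half_turn:
  assumes "C > 1" "cmod z = 1"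
  shows "cmod (half_turn C z) = 1"
proof -
  have "1 - complex_of_real C * z = - (z * cnj (complex_of_real C - z))"
    using cnj_unit[OF assms(2)] assms(2) by (auto simp: field_simps)
  then have "cmod (1 - complex_of_real C * z) = cmod (complex_of_real C - z)"
    using assms(2) by (metis complex_mod_cnj mult_1 norm_minus_cancel norm_mult)
  then show ?thesis
    unfolding half_turn_def using half_turn_denom_nonzero[OF assms] by (simp add: norm_divide)
qed

lemma half_turn_cnj: "half_turn C (cnj z) = cnj (half_turn C z)"
  unfolding half_turn_def by simp

lemma half_turn_unit_eq:
  assumes "cmod p = 1"
  shows "half_turn C p = - p * cnj (complex_of_real C - p) / (complex_of_real C - p)"
proof -
  have "p \<noteq> 0" using assms by auto
  then have "- p * cnj (complex_of_real C - p) = 1 - complex_of_real C * p"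
    using cnj_unit[OF assms] by (simp add: field_simps)
  then show ?thesis unfolding half_turn_def by simp
qed

lemma half_turn_diff:
  assumes "complex_of_real C - p \<noteq> 0" "complex_of_real C - q \<noteq> 0"
  shows "half_turn C p - half_turn C q
    = (1 - complex_of_real C * complex_of_real C) * (p - q) / ((complex_of_real C - p) * (complex_of_real C - q))"
  unfolding half_turn_def using assms by (simp add: field_simps; simp add: algebra_simps)

lemma orient_half_turn:
  assumes C: "C > 1" and unit: "cmod p = 1" "cmod q = 1" "cmod r = 1"
  shows "orient (half_turn C p) (half_turn C q) (half_turn C r)
    = (C * C - 1) ^ 3 / (cmod ((complex_of_real C - p) * (complex_of_real C - q) * (complex_of_real C - r)))\<^sup>2 * orient p q r"
proof -
  let ?C = "complex_of_real C"
  have field_identity: "((1 - K * K) * (p - q) / (a * b)) * ((1 - K * K) * (r - p) / (c * a))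
      * ((1 - K * K) * (r - q) / (c * b)) / (2 * \<i> * (- p * a' / a) * (- q * b' / b) * (- r * c' / c))
    = (K * K - 1) ^ 3 / (a * a' * b * b' * c * c') * ((p - q) * (r - p) * (r - q) / (2 * \<i> * p * q * r))"
    if "a \<noteq> 0" "b \<noteq> 0" "c \<noteq> 0" "a' \<noteq> 0" "b' \<noteq> 0" "c' \<noteq> 0" "p \<noteq> 0" "q \<noteq> 0" "r \<noteq> 0"
    for K a b c a' b' c' :: complex
    using that by (simp add: divide_simps power3_eq_cube) (simp add: algebra_simps)
  have den: "?C - p \<noteq> 0" "?C - q \<noteq> 0" "?C - r \<noteq> 0"
    using half_turn_denom_nonzero C unit by auto
  then have cnj_den: "cnj (?C - p) \<noteq> 0" "cnj (?C - q) \<noteq> 0" "cnj (?C - r) \<noteq> 0"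
    using complex_cnj_zero_iff by metis+
  have "p \<noteq> 0" "q \<noteq> 0" "r \<noteq> 0" using unit by auto
  have unit': "cmod (half_turn C p) = 1" "cmod (half_turn C q) = 1" "cmod (half_turn C r) = 1"
    using norm_half_turn C unit by auto
  have "complex_of_real (orient (half_turn C p) (half_turn C q) (half_turn C r))
      = (half_turn C p - half_turn C q) * (half_turn C r - half_turn C p) * (half_turn C r - half_turn C q)
        / (2 * \<i> * half_turn C p * half_turn C q * half_turn C r)"
    by (rule orient_unit_eq[OF unit'])
  also have "\<dots> = (C * C - 1) ^ 3 / ((?C - p) * cnj (?C - p) * (?C - q) * cnj (?C - q) * (?C - r) * cnj (?C - r))
        * ((p - q) * (r - p) * (r - q) / (2 * \<i> * p * q * r))"
    unfolding half_turn_diff[OF den(1,2)] half_turn_diff[OF den(3,1)] half_turn_diff[OF den(3,2)]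
    unfolding half_turn_unit_eq[OF unit(1)] half_turn_unit_eq[OF unit(2)] half_turn_unit_eq[OF unit(3)]
    using den cnj_den \<open>p \<noteq> 0\<close> \<open>q \<noteq> 0\<close> \<open>r \<noteq> 0\<close> by (subst field_identity) simp_all
  also have "\<dots> = complex_of_real ((C * C - 1) ^ 3)
      / complex_of_real ((cmod (?C - p))\<^sup>2 * (cmod (?C - q))\<^sup>2 * (cmod (?C - r))\<^sup>2)
      * complex_of_real (orient p q r)"
    unfolding orient_unit_eq[OF unit] of_real_mult complex_norm_square by (simp add: mult_ac)
  finally show ?thesis
    unfolding norm_mult power_mult_distrib
    by (metis (no_types) of_real_eq_iff of_real_divide of_real_mult)
qed

lemma orient_half_turn_pos:
  assumes "C > 1" "cmod p = 1" "cmod q = 1" "cmod r = 1" "orient p q r > 0"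
  shows "orient (half_turn C p) (half_turn C q) (half_turn C r) > 0"
proof -
  have "C * C - 1 > 0" using assms(1) less_1_mult[of C C] by simp
  moreover have "(complex_of_real C - p) * (complex_of_real C - q) * (complex_of_real C - r) \<noteq> 0"
    using half_turn_denom_nonzero assms(1-4) by auto
  ultimately show ?thesis
    using assms orient_half_turn[OF assms(1-4)] by simp
qed

lemma cis_add_cis_minus: "cis t + cis (- t) = complex_of_real (2 * cos t)"
  by (simp add: complex_eq_iff cis.code)

lemma cis_diff_cis_minus: "cis t - cis (- t) = 2 * \<i> * complex_of_real (sin t)"
  by (simp add: complex_eq_iff cis.code)

lemma double_half_turn_mobius:
  fixes K w x :: complex
  assumes d1: "K - w * x \<noteq> 0" and d2: "K - w * w * ((1 - K * (w * x)) / (K - w * x)) \<noteq> 0"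
  shows "w * ((1 - K * (w * w * ((1 - K * (w * x)) / (K - w * x))))
            / (K - w * w * ((1 - K * (w * x)) / (K - w * x))))
       = (w * w * (K * K * w * w - 1) * x + w * K * (1 - w * w)) / (w * K * (w * w - 1) * x + (K * K - w * w))"
    and "w * K * (w * w - 1) * x + (K * K - w * w)
       = (K - w * w * ((1 - K * (w * x)) / (K - w * x))) * (K - w * x)"
proof -
  define y where "y = (1 - K * (w * x)) / (K - w * x)"
  have "y * (K - w * x) = 1 - K * (w * x)" unfolding y_def using d1 by simp
  then have den: "w * K * (w * w - 1) * x + (K * K - w * w) = (K - w * w * y) * (K - w * x)"
    and num: "w * w * (K * K * w * w - 1) * x + w * K * (1 - w * w) = w * (1 - K * (w * w * y)) * (K - w * x)"
    by algebra+
  show "w * K * (w * w - 1) * x + (K * K - w * w) = (K - w * w * ((1 - K * (w * x)) / (K - w * x))) * (K - w * x)"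
    using den unfolding y_def .
  show "w * ((1 - K * (w * w * ((1 - K * (w * x)) / (K - w * x))))
            / (K - w * w * ((1 - K * (w * x)) / (K - w * x))))
       = (w * w * (K * K * w * w - 1) * x + w * K * (1 - w * w)) / (w * K * (w * w - 1) * x + (K * K - w * w))"
    unfolding num den y_def[symmetric] using d1 d2 unfolding y_def[symmetric] by simp
qed

text \<open>Under these relations \<open>z\<close> and \<open>b = 1/z\<close> are the two fixed points of the Moebius
  map of \<open>double_half_turn_mobius\<close>.\<close>

lemma double_half_turn_fixed_points:
  fixes K w b z x :: complex
  assumes "K * K * (w * w + 1) = 2 * w" "K * (b + z) = 2" "b * z = 1"
  shows "(w * w * (K * K * w * w - 1) * x + w * K * (1 - w * w)) - z * (w * K * (w * w - 1) * x + (K * K - w * w))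
         = (w * w * (K * K * w * w - 1) - z * (w * K * (w * w - 1))) * (x - z)"
    and "(w * w * (K * K * w * w - 1) * x + w * K * (1 - w * w)) - x * (w * K * (w * w - 1) * x + (K * K - w * w))
         = - (w * K * (w * w - 1)) * (x - b) * (x - z)"
  using assms by algebra+

lemma orient_ratio_identity:
  fixes a g D D' w x x' b z :: complex
  assumes "x * x' = 1" "b * z = 1" "w \<noteq> 0" "D \<noteq> 0" "D' \<noteq> 0" "b - z \<noteq> 0" "x \<noteq> 0" "z \<noteq> 0" "b \<noteq> 0"
  shows "(z - x) * (a * (x - z) / D) * (- g * (x - b) * (x - z) / D) / (2 * \<i> * z * x * (w ^ 4 * x * D' / D))
     = (- (a * g) / (w ^ 4 * (b - z))) * ((x - z) * (x' - b)) / (D * D')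
       * ((z - x) * (b - z) * (b - x) / (2 * \<i> * z * x * b))"
proof -
  have x': "x' = 1 / x" and z: "z = 1 / b" using assms(1,2,7,9) by (simp_all add: field_simps)
  show ?thesis unfolding x' z using assms(3-9) unfolding z by (simp add: field_simps)
qed

section \<open>Two generators in normalised position\<close>

text \<open>\<open>C\<close> is the distance from \<open>0\<close> to the centres of the
  isometric circles, \<open>\<delta>\<close> the central angle between consecutive sides and \<open>\<beta>\<close> the angular
  half-width of an isometric circle, so that side \<open>0\<close> lies on the circle through \<open>cis (- \<beta>)\<close>
  and \<open>cis \<beta>\<close>.  The relation \<open>C\<^sup>2 cos \<delta> = 1\<close> says that adjacent sides meet at right angles.\<close>

locale right_angled_sides =
  fixes C \<delta> \<beta> :: real
  assumes C_gt_1: "C > 1"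
    and cos_beta: "cos \<beta> * C = 1"
    and cos_delta: "C\<^sup>2 * cos \<delta> = 1"
    and delta_pos: "0 < \<delta>" and delta_less_pi: "\<delta> < pi"
    and beta_pos: "0 < \<beta>" and beta_less_pi: "\<beta> < pi"
begin

lemma sin_delta_pos: "sin \<delta> > 0"
  using delta_pos delta_less_pi by (intro sin_gt_zero)

lemma sin_beta_pos: "sin \<beta> > 0"
  using beta_pos beta_less_pi by (intro sin_gt_zero)

lemma half_turn_cis_beta: "half_turn C (cis \<beta>) = cis (- \<beta>)"
proof -
  have "complex_of_real C - cis \<beta> \<noteq> 0" using half_turn_denom_nonzero[OF C_gt_1] by simp
  moreover have "1 - complex_of_real C * cis \<beta> = cis (- \<beta>) * (complex_of_real C - cis \<beta>)"
    using cos_beta by (simp add: complex_eq_iff cis.code algebra_simps)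
  ultimately show ?thesis unfolding half_turn_def by (simp add: field_simps)
qed

lemma half_turn_cis_delta_minus_beta: "half_turn C (cis (\<delta> - \<beta>)) = cis (- \<delta> - \<beta>)"
proof -
  have cc: "C * cos \<delta> = cos \<beta>"
  proof -
    have "C * cos \<delta> = (C\<^sup>2 * cos \<delta>) * cos \<beta>" using cos_beta by (simp add: power2_eq_square algebra_simps)
    then show ?thesis using cos_delta by simp
  qed
  have re: "1 - C * cos (\<delta> - \<beta>) = C * cos (- \<delta> - \<beta>) - cos (2 * \<beta>)"
  proof -
    have "C * cos (- \<delta> - \<beta>) + C * cos (\<delta> - \<beta>) = 2 * (C * cos \<delta>) * cos \<beta>"
      by (simp add: cos_diff cos_add algebra_simps)
    also have "\<dots> = 1 + cos (2 * \<beta>)" using cc by (simp add: cos_double_cos power2_eq_square)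
    finally show ?thesis by simp
  qed
  have im: "- C * sin (\<delta> - \<beta>) = C * sin (- \<delta> - \<beta>) + sin (2 * \<beta>)"
  proof -
    have "C * sin (\<delta> - \<beta>) - C * sin (\<delta> + \<beta>) = - 2 * (C * cos \<delta>) * sin \<beta>"
      by (simp add: sin_diff sin_add algebra_simps)
    also have "\<dots> = - sin (2 * \<beta>)" using cc by (simp add: sin_double)
    moreover have "sin (- \<delta> - \<beta>) = - sin (\<delta> + \<beta>)" by (simp flip: sin_minus)
    ultimately show ?thesis by (simp add: algebra_simps)
  qed
  have "cis (- \<delta> - \<beta>) * (complex_of_real C - cis (\<delta> - \<beta>))
      = complex_of_real C * cis (- \<delta> - \<beta>) - cis (- 2 * \<beta>)"
    by (simp add: algebra_simps cis_mult)
  also have "\<dots> = 1 - complex_of_real C * cis (\<delta> - \<beta>)"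
    using re im by (simp add: complex_eq_iff cis.code)
  finally show ?thesis
    using half_turn_denom_nonzero[OF C_gt_1, of "cis (\<delta> - \<beta>)"]
    unfolding half_turn_def by (simp add: field_simps)
qed

lemma half_delta_less_beta: "\<delta> / 2 < \<beta>"
proof (rule ccontr)
  have cos_half: "cos (\<delta> / 2) > 0" using delta_pos delta_less_pi by (intro cos_gt_zero_pi) auto
  have cb: "cos \<beta> = 1 / C" using cos_beta C_gt_1 by (simp add: field_simps)
  have "(cos \<beta>)\<^sup>2 = cos \<delta>"
    unfolding cb using cos_delta C_gt_1 by (simp add: field_simps power2_eq_square)
  also have "\<dots> = 2 * (cos (\<delta> / 2))\<^sup>2 - 1" using cos_double_cos[of "\<delta> / 2"] by simp
  also have "\<dots> < (cos (\<delta> / 2))\<^sup>2"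
    using cos_squared_eq[of "\<delta> / 2"] sin_gt_zero[of "\<delta> / 2"] delta_pos delta_less_pi by simp
  finally have "cos \<beta> < cos (\<delta> / 2)"
    using cos_half by (rule power2_less_imp_less[OF _ less_imp_le])
  moreover assume "\<not> \<delta> / 2 < \<beta>"
  then have "cos (\<delta> / 2) \<le> cos \<beta>"
    using beta_pos delta_less_pi by (intro cos_monotone_0_pi_le) auto
  ultimately show False by simp
qed

lemma orient_cis_beta_delta: "orient (cis (- \<beta>)) (cis (\<beta> - \<delta>)) (cis \<beta>) > 0"
proof -
  have "orient (cis (- \<beta>)) (cis (\<beta> - \<delta>)) (cis \<beta>) = 4 * sin \<beta> * sin (\<delta> / 2) * sin (\<beta> - \<delta> / 2)"
    by (simp add: orient_cis diff_divide_distrib)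
  moreover have "sin (\<delta> / 2) > 0" "sin (\<beta> - \<delta> / 2) > 0"
    using delta_pos delta_less_pi beta_less_pi half_delta_less_beta by (auto intro: sin_gt_zero)
  ultimately show ?thesis using sin_beta_pos by simp
qed

lemma translation_trace_neg: "C\<^sup>2 * cos (2 * \<delta>) - 1 - 2 * C * sin \<delta> * sin \<beta> < 0"
proof -
  have "C\<^sup>2 * cos (2 * \<delta>) = 2 * (C\<^sup>2 * cos \<delta>) * cos \<delta> - C\<^sup>2"
    unfolding cos_double_cos by (simp add: algebra_simps power2_eq_square)
  then have "C\<^sup>2 * cos (2 * \<delta>) = 2 * cos \<delta> - C\<^sup>2"
    using cos_delta by simp
  moreover have "C\<^sup>2 > 1" using C_gt_1 by (simp add: power2_eq_square less_1_mult)
  moreover have "2 * C * sin \<delta> * sin \<beta> > 0" using C_gt_1 sin_delta_pos sin_beta_pos by simp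
  ultimately show ?thesis using cos_le_one[of \<delta>] by linarith
qed

lemma translation_coefficient_pos:
  fixes w K :: complex
  defines "w \<equiv> cis \<delta>" and "K \<equiv> complex_of_real C"
  shows "\<exists>\<kappa>>0. - ((w * w * (K * K * w * w - 1) - cis (- \<beta>) * (w * K * (w * w - 1))) * (w * K * (w * w - 1)))
      / (w ^ 4 * (cis \<beta> - cis (- \<beta>))) = complex_of_real \<kappa>"
proof -
  define w' Y where "w' = cis (- \<delta>)" and "Y = K * K * (w * w) - 1 - K * (w - w') * cis (- \<beta>)"
  define y where "y = C\<^sup>2 * cos (2 * \<delta>) - 1 - 2 * C * sin \<delta> * sin \<beta>"
  have "w * w' = 1" by (simp add: w_def w'_def cis_mult)
  then have a: "w * w * (K * K * w * w - 1) - cis (- \<beta>) * (w * K * (w * w - 1)) = w * w * Y"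
    and g: "w * K * (w * w - 1) = w * w * K * (w - w')"
    by (unfold Y_def) algebra+
  have "w \<noteq> 0" "cis \<beta> - cis (- \<beta>) \<noteq> 0"
    using sin_beta_pos by (simp_all add: w_def cis_diff_cis_minus)
  then have "- ((w * w * (K * K * w * w - 1) - cis (- \<beta>) * (w * K * (w * w - 1))) * (w * K * (w * w - 1)))
      / (w ^ 4 * (cis \<beta> - cis (- \<beta>))) = - (Y * K * (w - w')) / (cis \<beta> - cis (- \<beta>))"
    unfolding a unfolding g by (simp add: field_simps power4_eq_xxxx)
  also have "Y = complex_of_real y"
  proof -
    have "C * C * sin (2 * \<delta>) = 2 * sin \<delta> * (C\<^sup>2 * cos \<delta>)"
      unfolding sin_double by (simp add: algebra_simps power2_eq_square)
    also have "\<dots> = 2 * C * sin \<delta> * cos \<beta>"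
      using cos_delta cos_beta by (simp add: algebra_simps)
    finally have "K * K * cis (2 * \<delta>) - 1 - K * (2 * \<i> * complex_of_real (sin \<delta>)) * cis (- \<beta>) = complex_of_real y"
      by (simp add: K_def y_def complex_eq_iff cis.code power2_eq_square algebra_simps)
    then show ?thesis
      by (simp add: Y_def w_def w'_def cis_mult cis_diff_cis_minus)
  qed
  also have "- (complex_of_real y * K * (w - w')) / (cis \<beta> - cis (- \<beta>)) = complex_of_real (- y * C * sin \<delta> / sin \<beta>)"
    using sin_beta_pos by (simp add: K_def w_def w'_def cis_diff_cis_minus field_simps)
  finally have "- ((w * w * (K * K * w * w - 1) - cis (- \<beta>) * (w * K * (w * w - 1))) * (w * K * (w * w - 1)))
      / (w ^ 4 * (cis \<beta> - cis (- \<beta>))) = complex_of_real (- y * C * sin \<delta> / sin \<beta>)" .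
  moreover have "- y * C * sin \<delta> / sin \<beta> > 0"
    using translation_trace_neg C_gt_1 sin_delta_pos sin_beta_pos unfolding y_def
    by (intro divide_pos_pos mult_pos_pos) auto
  ultimately show ?thesis by blast
qed

lemma cis_relations:
  "complex_of_real C * complex_of_real C * (cis \<delta> * cis \<delta> + 1) = 2 * cis \<delta>"
  "complex_of_real C * (cis \<beta> + cis (- \<beta>)) = 2"
  "cis \<beta> * cis (- \<beta>) = 1"
  "cis \<beta> - cis (- \<beta>) \<noteq> 0"
proof -
  have "cis \<delta> * cis \<delta> + 1 = cis \<delta> * (cis \<delta> + cis (- \<delta>))"
    by (simp add: algebra_simps cis_mult)
  then show "complex_of_real C * complex_of_real C * (cis \<delta> * cis \<delta> + 1) = 2 * cis \<delta>"
    using cos_delta by (simp add: cis_add_cis_minus power2_eq_square) (simp flip: of_real_mult)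
  have "C * cos \<beta> = 1" using cos_beta by (simp add: mult.commute)
  then show "complex_of_real C * (cis \<beta> + cis (- \<beta>)) = 2"
    by (simp add: cis_add_cis_minus) (simp flip: of_real_mult)
  show "cis \<beta> * cis (- \<beta>) = 1" by (simp add: cis_mult)
  show "cis \<beta> - cis (- \<beta>) \<noteq> 0" using sin_beta_pos by (simp add: cis_diff_cis_minus)
qed

lemma translation_mobius_form:
  fixes x :: complex
  defines "w \<equiv> cis \<delta>" and "K \<equiv> complex_of_real C"
  defines "D \<equiv> w * K * (w * w - 1) * x + (K * K - w * w)"
  assumes "cmod x = 1"
  shows "D \<noteq> 0"
    and "w * half_turn C (w * w * half_turn C (w * x)) - cis (- \<beta>)
      = (w * w * (K * K * w * w - 1) - cis (- \<beta>) * (w * K * (w * w - 1))) * (x - cis (- \<beta>)) / D"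
    and "w * half_turn C (w * w * half_turn C (w * x)) - x = - (w * K * (w * w - 1)) * (x - cis \<beta>) * (x - cis (- \<beta>)) / D"
    and "w * half_turn C (w * w * half_turn C (w * x)) = w ^ 4 * x * cnj D / D"
proof -
  define N where "N = w * w * (K * K * w * w - 1) * x + w * K * (1 - w * w)"
  have wx: "cmod (w * x) = 1" using assms(4) by (simp add: w_def norm_mult)
  have d1: "K - w * x \<noteq> 0"
    unfolding K_def using half_turn_denom_nonzero[OF C_gt_1 wx] .
  have "cmod (w * w * half_turn C (w * x)) = 1"
    using norm_half_turn[OF C_gt_1 wx] by (simp add: w_def norm_mult)
  then have d2: "K - w * w * ((1 - K * (w * x)) / (K - w * x)) \<noteq> 0"
    using half_turn_denom_nonzero[OF C_gt_1] unfolding half_turn_def K_def by blast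
  have V: "w * half_turn C (w * w * half_turn C (w * x)) = N / D"
    unfolding half_turn_def K_def[symmetric] N_def D_def by (rule double_half_turn_mobius(1)[OF d1 d2])
  show D: "D \<noteq> 0"
    unfolding D_def double_half_turn_mobius(2)[OF d1 d2] using d1 d2 by simp
  note fixed = double_half_turn_fixed_points[OF cis_relations(1-3)[folded w_def K_def], of x]
  show "w * half_turn C (w * w * half_turn C (w * x)) - cis (- \<beta>)
      = (w * w * (K * K * w * w - 1) - cis (- \<beta>) * (w * K * (w * w - 1))) * (x - cis (- \<beta>)) / D"
    unfolding V using D fixed(1) by (simp add: N_def D_def field_simps)
  show "w * half_turn C (w * w * half_turn C (w * x)) - x = - (w * K * (w * w - 1)) * (x - cis \<beta>) * (x - cis (- \<beta>)) / D"
    unfolding V using D fixed(2) by (simp add: N_def D_def field_simps)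
  define w' where "w' = cis (- \<delta>)"
  have "w * w' = 1" by (simp add: w_def w'_def cis_mult)
  have "x \<noteq> 0" using assms(4) by auto
  have cnj_D: "cnj D = w' * K * (w' * w' - 1) * (1 / x) + (K * K - w' * w')"
    using cnj_unit[OF assms(4)] by (simp add: D_def w_def w'_def K_def cis_cnj)
  have "w ^ 4 * x * cnj D = w ^ 4 * (w' * K * (w' * w' - 1) + (K * K - w' * w') * x)"
    unfolding cnj_D using \<open>x \<noteq> 0\<close> by (simp add: field_simps)
  also have "\<dots> = N"
    unfolding N_def using \<open>w * w' = 1\<close> by algebra
  finally have "N = w ^ 4 * x * cnj D" ..
  then show "w * half_turn C (w * w * half_turn C (w * x)) = w ^ 4 * x * cnj D / D"
    unfolding V by simp
qed

lemma translation_moves_forward: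
  assumes x: "cmod x = 1" and between: "orient (cis (- \<beta>)) x (cis \<beta>) > 0"
  shows "orient (cis (- \<beta>)) x (cis \<delta> * half_turn C (cis \<delta> * cis \<delta> * half_turn C (cis \<delta> * x))) > 0"
proof -
  define w b z K where "w = cis \<delta>" and "b = cis \<beta>" and "z = cis (- \<beta>)" and "K = complex_of_real C"
  define V where "V = w * half_turn C (w * w * half_turn C (w * x))"
  define D where "D = w * K * (w * w - 1) * x + (K * K - w * w)"
  define g where "g = w * K * (w * w - 1)"
  define a where "a = w * w * (K * K * w * w - 1) - z * g"
  note mobius = translation_mobius_form[OF x, folded w_def K_def z_def b_def, folded D_def g_def V_def, folded a_def]
  have unit: "cmod w = 1" "cmod b = 1" "cmod z = 1" "cmod V = 1"
    using norm_half_turn[OF C_gt_1] x by (simp_all add: w_def b_def z_def V_def norm_mult)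
  have "w \<noteq> 0" "b \<noteq> 0" "z \<noteq> 0" "x \<noteq> 0" "cnj D \<noteq> 0" using unit x mobius(1) by auto
  obtain \<kappa> where "\<kappa> > 0" and coefficient: "- (a * g) / (w ^ 4 * (b - z)) = complex_of_real \<kappa>"
    using translation_coefficient_pos unfolding a_def g_def w_def b_def z_def K_def by blast
  have "complex_of_real (orient z x V) = (z - x) * (V - z) * (V - x) / (2 * \<i> * z * x * V)"
    by (rule orient_unit_eq[OF unit(3) x unit(4)])
  also have "\<dots> = (z - x) * (a * (x - z) / D) * (- g * (x - b) * (x - z) / D) / (2 * \<i> * z * x * (w ^ 4 * x * cnj D / D))"
    using mobius(2-4) by simp
  also have "\<dots> = (- (a * g) / (w ^ 4 * (b - z))) * ((x - z) * (1 / x - b)) / (D * cnj D)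
      * ((z - x) * (b - z) * (b - x) / (2 * \<i> * z * x * b))"
    using cis_relations(3-4)[folded b_def z_def] \<open>w \<noteq> 0\<close> mobius(1) \<open>cnj D \<noteq> 0\<close> \<open>x \<noteq> 0\<close> \<open>z \<noteq> 0\<close> \<open>b \<noteq> 0\<close>
    by (intro orient_ratio_identity) simp_all
  also have "(x - z) * (1 / x - b) = complex_of_real ((cmod (x - z))\<^sup>2)"
    using complex_norm_square[of "x - z"] cnj_unit[OF x] by (simp add: z_def b_def cis_cnj)
  also have "D * cnj D = complex_of_real ((cmod D)\<^sup>2)"
    using complex_norm_square[of D] by simp
  also have "(z - x) * (b - z) * (b - x) / (2 * \<i> * z * x * b) = complex_of_real (orient z x b)"
    by (rule orient_unit_eq[OF unit(3) x unit(2), symmetric])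
  finally have "orient z x V = \<kappa> * (cmod (x - z))\<^sup>2 / (cmod D)\<^sup>2 * orient z x b"
    unfolding coefficient by (metis (no_types) of_real_eq_iff of_real_divide of_real_mult)
  moreover have "x \<noteq> z" using between unfolding z_def orient_def by auto
  ultimately have "orient z x V > 0"
    using \<open>\<kappa> > 0\<close> mobius(1) between unfolding z_def b_def by simp
  then show ?thesis unfolding z_def V_def w_def .
qed

lemma normalized_pair_forward:
  assumes u: "cmod u = 1"
    and in_side: "orient (cis (- \<beta>)) u (cis (\<beta> - \<delta>)) > 0"
    and image_in_side: "orient (cis (- \<delta> - \<beta>)) (half_turn C (cis \<delta> * u)) (cis (\<beta> - 2 * \<delta>)) > 0"
  shows "orient u (cis \<delta> * half_turn C (cis \<delta> * cis \<delta> * half_turn C (cis \<delta> * u))) (cis (\<delta> - \<beta>)) > 0"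
proof -
  define w where "w = cis \<delta>"
  define y where "y = half_turn C (w * u)"
  define V where "V = w * half_turn C (w * w * y)"
  have y: "cmod y = 1" and ww: "cmod (w * w) = 1" and V: "cmod V = 1"
    using norm_half_turn[OF C_gt_1] u by (simp_all add: y_def V_def w_def norm_mult)
  have rotated: "orient (cis (\<delta> - \<beta>)) (w * w * y) (cis \<beta>) > 0"
    using image_in_side orient_mult_unit[OF ww, of "cis (- \<delta> - \<beta>)" y "cis (\<beta> - 2 * \<delta>)"]
    by (simp add: y_def w_def cis_mult algebra_simps)
  then have "orient (cis (- \<delta> - \<beta>)) (half_turn C (w * w * y)) (cis (- \<beta>)) > 0"
    using orient_half_turn_pos[OF C_gt_1 _ _ _ rotated] y ww
    by (simp add: half_turn_cis_delta_minus_beta half_turn_cis_beta norm_mult)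
  then have V_in_side: "orient (cis (- \<beta>)) V (cis (\<delta> - \<beta>)) > 0"
    using orient_mult_unit[of w "cis (- \<delta> - \<beta>)" "half_turn C (w * w * y)" "cis (- \<beta>)"]
    by (simp add: V_def w_def cis_mult)
  have "orient (cis (- \<beta>)) u (cis \<beta>) > 0"
    using orient_pos_trans_right[OF _ u _ _ in_side orient_cis_beta_delta] by simp
  then have "orient (cis (- \<beta>)) u V > 0"
    using translation_moves_forward[OF u] unfolding V_def y_def w_def by simp
  then show ?thesis
    using orient_pos_shift[OF _ u V _ _ V_in_side] unfolding V_def y_def w_def by simp
qed

text \<open>Complex conjugation reverses the cyclic order and commutes with the half-turn, so the
  backward statement is the forward one read in the mirror.\<close>

lemma normalized_pair_backward:
  assumes u: "cmod u = 1"
    and in_side: "orient (cis (- \<beta>)) u (cis (\<beta> - \<delta>)) > 0"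
    and image_in_side: "orient (cis (2 * \<delta> - \<beta>)) (half_turn C u) (cis (\<delta> + \<beta>)) > 0"
  shows "orient (cis (\<beta> - 2 * \<delta>)) (cis (- 2 * \<delta>) * half_turn C (cis (- 2 * \<delta>) * half_turn C u)) u > 0"
proof -
  define x where "x = cis (- \<delta>) * cnj u"
  define Q where "Q = half_turn C (cis (- 2 * \<delta>) * half_turn C u)"
  have x: "cmod x = 1" using u by (simp add: x_def norm_mult)
  have wx: "cis \<delta> * x = cnj u" by (simp add: x_def cis_mult mult.assoc[symmetric])
  have mirror: "cis \<delta> * cis (- \<beta>) = cnj (cis (\<beta> - \<delta>))" "cis \<delta> * cis (\<beta> - \<delta>) = cnj (cis (- \<beta>))"
    by (simp_all add: cis_mult cis_cnj)
  have "orient (cis (- \<beta>)) x (cis (\<beta> - \<delta>)) > 0"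
    using orient_mult_unit[of "cis \<delta>" "cis (- \<beta>)" x "cis (\<beta> - \<delta>)"] in_side
    unfolding wx mirror orient_cnj by simp
  moreover have "orient (cis (- \<delta> - \<beta>)) (half_turn C (cis \<delta> * x)) (cis (\<beta> - 2 * \<delta>)) > 0"
  proof -
    have mirror: "cis (- \<delta> - \<beta>) = cnj (cis (\<delta> + \<beta>))" "cis (\<beta> - 2 * \<delta>) = cnj (cis (2 * \<delta> - \<beta>))"
      by (simp_all add: cis_cnj)
    show ?thesis
      unfolding wx half_turn_cnj mirror orient_cnj using image_in_side .
  qed
  ultimately have forward: "orient x (cis \<delta> * half_turn C (cis \<delta> * cis \<delta> * half_turn C (cis \<delta> * x)))
      (cis (\<delta> - \<beta>)) > 0"
    by (rule normalized_pair_forward[OF x])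
  have "cis \<delta> * half_turn C (cis \<delta> * cis \<delta> * half_turn C (cis \<delta> * x)) = cnj (cis (- \<delta>) * Q)"
    unfolding wx half_turn_cnj Q_def by (simp add: cis_cnj cis_mult half_turn_cnj[symmetric])
  moreover have "x = cnj (cis \<delta> * u)" "cis (\<delta> - \<beta>) = cnj (cis (\<beta> - \<delta>))"
    by (simp_all add: x_def cis_cnj)
  ultimately have "orient (cis (\<beta> - \<delta>)) (cis (- \<delta>) * Q) (cis \<delta> * u) > 0"
    using forward by (simp only: orient_cnj)
  then show ?thesis
    using orient_mult_unit[of "cis \<delta>" "cis (\<beta> - 2 * \<delta>)" "cis (- 2 * \<delta>) * Q" u]
    by (simp add: Q_def cis_mult mult.assoc[symmetric] algebra_simps)
qed

end

section \<open>The generators of the polygon\<close>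

lemma delta_bounds:
  assumes "g \<ge> 2"
  shows "0 < delta g" "delta g \<le> pi / 6"
proof -
  have N: "real_of_int (Nsides g) = 8 * real g - 4" "8 * real g - 4 \<ge> 12"
    using assms by (simp_all add: Nsides_def)
  then show "0 < delta g" by (simp add: delta_def)
  have "delta g \<le> 2 * pi / 12"
    unfolding delta_def N(1) using N(2) by (intro divide_left_mono) auto
  then show "delta g \<le> pi / 6" by simp
qed

lemma right_angled_sides_polygon:
  assumes "g \<ge> 2"
  shows "right_angled_sides (Cdist g) (delta g) (beta g)"
proof -
  note \<delta> = delta_bounds[OF assms]
  have "0 < cos (delta g)" "cos (delta g) < 1"
    using \<delta> cos_monotone_0_pi[of 0 "delta g"] by (auto intro: cos_gt_zero_pi)
  then have sq: "0 < sqrt (cos (delta g))" "sqrt (cos (delta g)) < 1" by auto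
  have cos_beta: "cos (beta g) = sqrt (cos (delta g))"
    unfolding beta_def using sq by (simp add: cos_arccos_abs)
  show ?thesis
  proof
    show "Cdist g > 1" unfolding Cdist_def using sq by simp
    show "cos (beta g) * Cdist g = 1" unfolding cos_beta Cdist_def using sq by simp
    show "(Cdist g)\<^sup>2 * cos (delta g) = 1" unfolding Cdist_def using sq by (simp add: power_divide)
    show "0 < beta g" "beta g < pi"
      unfolding beta_def using arccos_lt_bounded[of "sqrt (cos (delta g))"] sq by auto
  qed (use \<delta> pi_gt_zero in auto)
qed

lemma Rrad_pos: "g \<ge> 2 \<Longrightarrow> Rrad g > 0"
  using right_angled_sides.C_gt_1[OF right_angled_sides_polygon] less_1_mult[of "Cdist g" "Cdist g"]
  by (simp add: Rrad_def power2_eq_square)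

lemma mobius_half_turn_form:
  fixes e f p z :: complex and C R :: real
  assumes "p * p = e * f" "cnj p = 1 / p" "cnj f = 1 / f" "e \<noteq> 0" "f \<noteq> 0" "p \<noteq> 0" "R \<noteq> 0"
    and "complex_of_real C * e - z \<noteq> 0"
  shows "(let c = \<i> * p / complex_of_real R; a = complex_of_real C * f * cnj c
          in (a * z + c) / (cnj c * z + cnj a)) = f * half_turn C (z / e)"
proof -
  define c a where "c = \<i> * p / complex_of_real R" and "a = complex_of_real C * f * cnj c"
  have cnj_c: "cnj c = - \<i> / (p * complex_of_real R)"
    unfolding c_def complex_cnj_mult complex_cnj_divide assms(2) by simp
  have cnj_a: "cnj a = \<i> * complex_of_real C * p / (f * complex_of_real R)"
    unfolding a_def cnj_c complex_cnj_mult complex_cnj_divide assms(2,3) using assms(6) by simp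
  have e: "e = p * p / f" using assms(1,5) by (simp add: field_simps)
  have num: "a * z + c = \<i> * f * (e - complex_of_real C * z) / (p * complex_of_real R)"
    unfolding a_def unfolding cnj_c unfolding c_def e using assms(5-7) by (simp add: field_simps)
  have den: "cnj c * z + cnj a = \<i> * (complex_of_real C * e - z) / (p * complex_of_real R)"
    unfolding cnj_a cnj_c e using assms(5-7) by (simp add: field_simps)
  have half: "half_turn C (z / e) = (e - complex_of_real C * z) / (complex_of_real C * e - z)"
    unfolding half_turn_def using assms(4,8) by (simp add: field_simps)
  show ?thesis
    unfolding Let_def c_def[symmetric] a_def[symmetric] num den half using assms(6-8) by (simp add: field_simps)
qed

text \<open>\<open>Tm\<close> depends on its angle \<open>th\<close> only through \<open>cis (2 * th) = cis (alpha g i) * cis (alpha g (sigma g i))\<close>,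
  so the same normal form holds for both parities of \<open>i\<close>.\<close>

lemma Tm_eq_half_turn:
  assumes "g \<ge> 2" "cmod z = 1"
  shows "Tm g i z = cis (alpha g (sigma g i)) * half_turn (Cdist g) (z / cis (alpha g i))"
proof -
  define e f p where "e = cis (alpha g i)" and "f = cis (alpha g (sigma g i))"
    and "p = cis ((alpha g i + alpha g (sigma g i)) / 2)"
  have "p * p = e * f" unfolding e_def f_def p_def cis_mult field_sum_of_halves ..
  moreover have "cmod (z / e) = 1" using assms(2) by (simp add: e_def norm_divide)
  then have "complex_of_real (Cdist g) - z / e \<noteq> 0"
    using half_turn_denom_nonzero right_angled_sides.C_gt_1[OF right_angled_sides_polygon[OF assms(1)]]
    by blast
  then have "complex_of_real (Cdist g) * e - z \<noteq> 0"
    by (simp add: e_def field_simps)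
  ultimately have "(let c = \<i> * p / complex_of_real (Rrad g); a = complex_of_real (Cdist g) * f * cnj c
      in (a * z + c) / (cnj c * z + cnj a)) = f * half_turn (Cdist g) (z / e)"
    using Rrad_pos[OF assms(1)]
    by (intro mobius_half_turn_form) (simp_all add: e_def f_def p_def cis_cnj inverse_eq_divide flip: cis_inverse)
  then show ?thesis
    unfolding Tm_def e_def f_def p_def by (simp only: Let_def)
qed

lemma sigma_sigma_minus_2: "sigma g (sigma g i - 2) = i + 2"
  by (cases "even i") (auto simp: sigma_def)

lemma sigma_sigma_plus_2: "sigma g (sigma g i + 2) = i - 2"
  by (cases "even i") (auto simp: sigma_def)

lemma cis_alpha_add: "cis (alpha g (i + k)) = cis (alpha g i) * cis (real_of_int k * delta g)"
  by (simp add: alpha_def cis_mult algebra_simps)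

lemma Pt_eq: "Pt g i = cis (alpha g i) * cis (- beta g)"
  by (simp add: Pt_def cis_mult)

lemma Qt_eq: "Qt g i = cis (alpha g i) * cis (beta g - delta g)"
  by (simp add: Qt_def alpha_def cis_mult algebra_simps)

lemma Tm_forward_normal_form:
  assumes g: "g \<ge> 2" and u: "cmod u = 1"
  shows "Tm g (j - 1) (cis (alpha g j) * u)
      = cis (alpha g (sigma g (j - 1))) * half_turn (Cdist g) (cis (delta g) * u)"
    and "Tm g (theta g (j - 1) - 1) (Tm g (j - 1) (cis (alpha g j) * u)) = cis (alpha g j)
      * (cis (delta g) * half_turn (Cdist g) (cis (delta g) * cis (delta g) * half_turn (Cdist g) (cis (delta g) * u)))"
proof -
  define k where "k = sigma g (j - 1)"
  have C: "Cdist g > 1" by (rule right_angled_sides.C_gt_1[OF right_angled_sides_polygon[OF g]])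
  have "cis (alpha g j) * u / cis (alpha g (j - 1)) = cis (delta g) * u"
    using cis_alpha_add[of g "j - 1" 1] by simp
  then show T: "Tm g (j - 1) (cis (alpha g j) * u) = cis (alpha g k) * half_turn (Cdist g) (cis (delta g) * u)"
    using Tm_eq_half_turn[OF g] u by (simp add: k_def norm_mult)
  have "cis (alpha g k) = cis (alpha g (k - 2)) * (cis (delta g) * cis (delta g))"
    using cis_alpha_add[of g "k - 2" 2] by (simp add: cis_mult)
  then have "Tm g (j - 1) (cis (alpha g j) * u) / cis (alpha g (k - 2))
      = cis (delta g) * cis (delta g) * half_turn (Cdist g) (cis (delta g) * u)"
    by (simp add: T)
  moreover have "cis (alpha g (1 + j)) = cis (alpha g j) * cis (delta g)"
    using cis_alpha_add[of g j 1] by (simp add: add.commute)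
  moreover have "cmod (Tm g (j - 1) (cis (alpha g j) * u)) = 1"
    using norm_half_turn[OF C] u by (simp add: T norm_mult)
  ultimately show "Tm g (theta g (j - 1) - 1) (Tm g (j - 1) (cis (alpha g j) * u)) = cis (alpha g j)
      * (cis (delta g) * half_turn (Cdist g) (cis (delta g) * cis (delta g) * half_turn (Cdist g) (cis (delta g) * u)))"
    using Tm_eq_half_turn[OF g, of "Tm g (j - 1) (cis (alpha g j) * u)" "k - 2"]
    by (simp add: theta_def k_def sigma_sigma_minus_2 mult.assoc)
qed

lemma Tm_backward_normal_form:
  assumes g: "g \<ge> 2" and u: "cmod u = 1"
  shows "Tm g j (cis (alpha g j) * u) = cis (alpha g (sigma g j)) * half_turn (Cdist g) u"
    and "Tm g (rho g j + 1) (Tm g j (cis (alpha g j) * u)) = cis (alpha g j)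
      * (cis (- 2 * delta g) * half_turn (Cdist g) (cis (- 2 * delta g) * half_turn (Cdist g) u))"
proof -
  define k where "k = sigma g j"
  have C: "Cdist g > 1" by (rule right_angled_sides.C_gt_1[OF right_angled_sides_polygon[OF g]])
  show T: "Tm g j (cis (alpha g j) * u) = cis (alpha g k) * half_turn (Cdist g) u"
    using Tm_eq_half_turn[OF g] u by (simp add: k_def norm_mult)
  have "cis (alpha g (k + 2)) = cis (alpha g k) * cis (2 * delta g)"
    using cis_alpha_add[of g k 2] by simp
  then have "Tm g j (cis (alpha g j) * u) / cis (alpha g (k + 2)) = cis (- 2 * delta g) * half_turn (Cdist g) u"
    unfolding T by (simp add: divide_inverse mult.commute flip: cis_inverse)
  moreover have "cis (alpha g (j - 2)) = cis (alpha g j) * cis (- 2 * delta g)"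
    using cis_alpha_add[of g j "- 2"] by simp
  moreover have "cmod (Tm g j (cis (alpha g j) * u)) = 1"
    using norm_half_turn[OF C] u by (simp add: T norm_mult)
  ultimately show "Tm g (rho g j + 1) (Tm g j (cis (alpha g j) * u)) = cis (alpha g j)
      * (cis (- 2 * delta g) * half_turn (Cdist g) (cis (- 2 * delta g) * half_turn (Cdist g) u))"
    using Tm_eq_half_turn[OF g, of "Tm g j (cis (alpha g j) * u)" "k + 2"]
    by (simp add: rho_def k_def sigma_sigma_plus_2 mult.assoc add.commute)
qed

lemma Tm_pair_forward:
  assumes g: "g \<ge> 2"
    and x: "x \<in> arc_oo (Pt g j) (Qt g j)"
    and image: "Tm g (j - 1) x \<in> arc_oo (Pt g (theta g (j - 1))) (Qt g (theta g (j - 1)))"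
  shows "Tm g (theta g (j - 1) - 1) (Tm g (j - 1) x) \<in> arc_oo x (Pt g (j + 1))"
proof -
  interpret right_angled_sides "Cdist g" "delta g" "beta g"
    by (rule right_angled_sides_polygon[OF g])
  define e k u where "e = cis (alpha g j)" and "k = sigma g (j - 1)" and "u = x / e"
  have x_eq: "x = e * u" and e: "cmod e = 1" by (simp_all add: u_def e_def)
  have u: "cmod u = 1" using x by (simp add: arc_oo_def u_def e_def norm_divide)
  note T = Tm_forward_normal_form[OF g u, of j, folded e_def k_def x_eq]
  have "Pt g (theta g (j - 1)) = cis (alpha g k) * cis (- delta g - beta g)"
    "Qt g (theta g (j - 1)) = cis (alpha g k) * cis (beta g - 2 * delta g)"
    by (simp_all add: theta_def k_def Pt_def Qt_def alpha_def cis_mult algebra_simps)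
  then have "orient (cis (- delta g - beta g)) (half_turn (Cdist g) (cis (delta g) * u)) (cis (beta g - 2 * delta g)) > 0"
    using image mult_unit_in_arc_oo_iff_orient[of "cis (alpha g k)"] norm_half_turn[OF C_gt_1] u
    by (simp add: T(1) norm_mult)
  moreover have "orient (cis (- beta g)) u (cis (beta g - delta g)) > 0"
    using x mult_unit_in_arc_oo_iff_orient[OF e u] by (simp add: x_eq Pt_eq Qt_eq e_def)
  ultimately have "orient u (cis (delta g) * half_turn (Cdist g) (cis (delta g) * cis (delta g)
      * half_turn (Cdist g) (cis (delta g) * u))) (cis (delta g - beta g)) > 0"
    using normalized_pair_forward[OF u] by blast
  moreover have "Pt g (j + 1) = e * cis (delta g - beta g)"
    by (simp add: e_def Pt_def alpha_def cis_mult algebra_simps)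
  ultimately show ?thesis
    unfolding T(2) using mult_unit_in_arc_oo_iff_orient[OF e _ u] norm_half_turn[OF C_gt_1] u
    by (simp add: x_eq norm_mult)
qed

lemma Tm_pair_backward:
  assumes g: "g \<ge> 2"
    and x: "x \<in> arc_oo (Pt g j) (Qt g j)"
    and image: "Tm g j x \<in> arc_oo (Pt g (rho g j + 1)) (Qt g (rho g j + 1))"
  shows "Tm g (rho g j + 1) (Tm g j x) \<in> arc_oo (Qt g (j - 1)) x"
proof -
  interpret right_angled_sides "Cdist g" "delta g" "beta g"
    by (rule right_angled_sides_polygon[OF g])
  define e k u where "e = cis (alpha g j)" and "k = sigma g j" and "u = x / e"
  have x_eq: "x = e * u" and e: "cmod e = 1" by (simp_all add: u_def e_def)
  have u: "cmod u = 1" using x by (simp add: arc_oo_def u_def e_def norm_divide)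
  note T = Tm_backward_normal_form[OF g u, of j, folded e_def k_def x_eq]
  have "Pt g (rho g j + 1) = cis (alpha g k) * cis (2 * delta g - beta g)"
    "Qt g (rho g j + 1) = cis (alpha g k) * cis (delta g + beta g)"
    by (simp_all add: rho_def k_def Pt_def Qt_def alpha_def cis_mult algebra_simps)
  then have "orient (cis (2 * delta g - beta g)) (half_turn (Cdist g) u) (cis (delta g + beta g)) > 0"
    using image mult_unit_in_arc_oo_iff_orient[of "cis (alpha g k)"] norm_half_turn[OF C_gt_1] u
    by (simp add: T(1) norm_mult)
  moreover have "orient (cis (- beta g)) u (cis (beta g - delta g)) > 0"
    using x mult_unit_in_arc_oo_iff_orient[OF e u] by (simp add: x_eq Pt_eq Qt_eq e_def)
  ultimately have "orient (cis (beta g - 2 * delta g)) (cis (- 2 * delta g) * half_turn (Cdist g)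
      (cis (- 2 * delta g) * half_turn (Cdist g) u)) u > 0"
    using normalized_pair_backward[OF u] by blast
  moreover have "Qt g (j - 1) = e * cis (beta g - 2 * delta g)"
    by (simp add: e_def Qt_def alpha_def cis_mult algebra_simps)
  ultimately show ?thesis
    unfolding T(2) using mult_unit_in_arc_oo_iff_orient[OF e _ _ u] norm_half_turn[OF C_gt_1] u
    by (simp add: x_eq norm_mult)
qed

theorem lemma3p6:
  fixes g :: nat and A :: "int \<Rightarrow> complex" and j :: int and x :: complex
  assumes "g \<ge> 2"
    and "\<forall>i. A (i + Nsides g) = A i"
    and "\<forall>i. A i \<in> arc_oo (Pt g i) (Qt g i)"
  shows "(x \<in> arc_co (A j) (Qt g j) \<and>
            Tm g (j - 1) x \<in> arc_oc (Pt g (theta g (j - 1))) (A (theta g (j - 1)))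
          \<longrightarrow> Tm g (theta g (j - 1) - 1) (Tm g (j - 1) x) \<in> arc_oo x (Pt g (j + 1)))
       \<and> (x \<in> arc_oc (Pt g j) (A j) \<and>
            Tm g j x \<in> arc_co (A (rho g j + 1)) (Qt g (rho g j + 1))
          \<longrightarrow> Tm g (rho g j + 1) (Tm g j x) \<in> arc_oo (Qt g (j - 1)) x)"
proof -
  have unit: "cmod (Pt g i) = 1" "cmod (Qt g i) = 1" for i
    by (simp_all add: Pt_def Qt_def)
  have "arc_co (A i) (Qt g i) \<subseteq> arc_oo (Pt g i) (Qt g i)" "arc_oc (Pt g i) (A i) \<subseteq> arc_oo (Pt g i) (Qt g i)" for i
    using assms(3) arc_co_subset_arc_oo arc_oc_subset_arc_oo unit by blast+
  then show ?thesis
    using Tm_pair_forward[OF assms(1)] Tm_pair_backward[OF assms(1)] by blast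
qed

end
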